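(* A ring $R$ is feckly clean if and only if $J\text{-spec}(R)$ is strongly zero-dimensional.
   Context: Rings are associative with identity, not necessarily commutative; $J(R)$ is the Jacobson radical. An element $u\in R$ is full if $RuR=R$. An element $a\in R$ is feckly clean if there exist $e\in R$ and a full element $u\in R$ with $a=e+u$ and $eR(1-e)\subseteq J(R)$; $R$ is feckly clean if every element is feckly clean. $J\text{-spec}(R)$ is the set of all prime (two-sided) ideals $P$ of $R$ with $J(R)\subseteq P$, topologized so that the closed sets are exactly the sets $W(I)=\{P\in J\text{-spec}(R): I\subseteq P\}$ for ideals $I$ of $R$. A topological space $X$ is strongly zero-dimensional if for any two disjoint closed sets $A,B\subseteq X$ there exist disjoint clopen sets $C_1,C_2$ with $A\subseteq C_1$ and $B\subseteq C_2$. *)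

theory Defs
  imports Main
begin

definition left_ideal :: "'a::ring_1 set \<Rightarrow> bool" where
  "left_ideal I \<longleftrightarrow> 0 \<in> I \<and> (\<forall>x\<in>I. \<forall>y\<in>I. x + y \<in> I) \<and> (\<forall>x\<in>I. - x \<in> I)
     \<and> (\<forall>r. \<forall>x\<in>I. r * x \<in> I)"

definition maximal_left_ideal :: "'a::ring_1 set \<Rightarrow> bool" where
  "maximal_left_ideal M \<longleftrightarrow> left_ideal M \<and> M \<noteq> UNIV \<and>
     (\<forall>N. left_ideal N \<and> M \<subseteq> N \<longrightarrow> N = M \<or> N = UNIV)"

definition jacobson :: "'a::ring_1 set" where
  "jacobson = \<Inter>{M. maximal_left_ideal M}"

definition ideal :: "'a::ring_1 set \<Rightarrow> bool" where
  "ideal I \<longleftrightarrow> 0 \<in> I \<and> (\<forall>x\<in>I. \<forall>y\<in>I. x + y \<in> I) \<and> (\<forall>x\<in>I. - x \<in> I)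
     \<and> (\<forall>r. \<forall>x\<in>I. r * x \<in> I \<and> x * r \<in> I)"

definition gen_ideal :: "'a::ring_1 set \<Rightarrow> 'a set" where
  "gen_ideal S = \<Inter>{I. ideal I \<and> S \<subseteq> I}"

definition full :: "'a::ring_1 \<Rightarrow> bool" where
  "full u \<longleftrightarrow> gen_ideal {u} = UNIV"

definition feckly_clean_elem :: "'a::ring_1 \<Rightarrow> bool" where
  "feckly_clean_elem a \<longleftrightarrow> (\<exists>e u. full u \<and> a = e + u \<and> (\<forall>r. e * r * (1 - e) \<in> jacobson))"

definition feckly_clean :: "'a::ring_1 itself \<Rightarrow> bool" where
  "feckly_clean (_ :: 'a itself) \<longleftrightarrow> (\<forall>a :: 'a. feckly_clean_elem a)"

definition prime_ideal :: "'a::ring_1 set \<Rightarrow> bool" where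
  "prime_ideal P \<longleftrightarrow> ideal P \<and> P \<noteq> UNIV \<and>
     (\<forall>A B. ideal A \<and> ideal B \<and> (\<forall>a\<in>A. \<forall>b\<in>B. a * b \<in> P) \<longrightarrow> A \<subseteq> P \<or> B \<subseteq> P)"

definition J_spec :: "'a::ring_1 set set" where
  "J_spec = {P. prime_ideal P \<and> jacobson \<subseteq> P}"

definition W :: "'a::ring_1 set \<Rightarrow> 'a set set" where
  "W I = {P \<in> J_spec. I \<subseteq> P}"

definition J_closed :: "'a::ring_1 set set \<Rightarrow> bool" where
  "J_closed S \<longleftrightarrow> (\<exists>I. ideal I \<and> S = W I)"

definition J_clopen :: "'a::ring_1 set set \<Rightarrow> bool" where
  "J_clopen C \<longleftrightarrow> C \<subseteq> J_spec \<and> J_closed C \<and> J_closed (J_spec - C)"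

definition J_spec_strongly_zero_dim :: "'a::ring_1 itself \<Rightarrow> bool" where
  "J_spec_strongly_zero_dim (_ :: 'a itself) \<longleftrightarrow>
     (\<forall>A B :: 'a set set. J_closed A \<and> J_closed B \<and> A \<inter> B = {} \<longrightarrow>
        (\<exists>C1 C2. J_clopen C1 \<and> J_clopen C2 \<and> C1 \<inter> C2 = {} \<and> A \<subseteq> C1 \<and> B \<subseteq> C2))"

end

theory Submission
  imports Defs
begin

(* Write V a for the set of primes P in J-spec(R) with a in P.  Everything rests on
   the fact that J-spec(R) has "enough points": every proper two-sided ideal lies in some
   P in J-spec(R), and J(R) is the intersection of J-spec(R).  Both follow from one construction:
   for a maximal left ideal N, its core {r. rR \<subseteq> N} (the largest two-sided ideal inside N, the
   annihilator of the simple module R/N) is a prime ideal containing J(R); maximal left ideals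
   exist above proper left ideals by Zorn's lemma.
   With this, "u is full" means that u lies in no P, and "eR(1-e) \<subseteq> J(R)" means that every P
   contains e or 1 - e; so the sets V e and V (1 - e) are complementary clopen sets.  Conversely
   every clopen set C has this form C \<subseteq> V (1 - l), complement \<subseteq> V l, because disjoint closed
   sets W I, W K come from comaximal ideals, I + K = R.  The theorem then is a short argument
   about such splittings: if 1 = x + y with x in I, y in K, a decomposition x = e + u separates
   W I from W K by V (1 - e) and V e; conversely a clopen set separating V a from V (1 - a)
   yields the decomposition of a. *)

text \<open>Closure under negation is redundant: it follows from closure under left multiplication.\<close>

lemma left_idealI:
  assumes "0 \<in> I" "\<And>x y. x \<in> I \<Longrightarrow> y \<in> I \<Longrightarrow> x + y \<in> I" "\<And>r x. x \<in> I \<Longrightarrow> r * x \<in> I"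
  shows "left_ideal I"
  unfolding left_ideal_def using assms by (metis mult_minus1)

lemma idealI:
  assumes "0 \<in> I" "\<And>x y. x \<in> I \<Longrightarrow> y \<in> I \<Longrightarrow> x + y \<in> I"
    and "\<And>r x. x \<in> I \<Longrightarrow> r * x \<in> I" "\<And>r x. x \<in> I \<Longrightarrow> x * r \<in> I"
  shows "ideal I"
  unfolding ideal_def using assms by (metis mult_minus1)

lemma left_ideal_zero: "left_ideal I \<Longrightarrow> 0 \<in> I"
  unfolding left_ideal_def by blast

lemma left_ideal_add: "left_ideal I \<Longrightarrow> x \<in> I \<Longrightarrow> y \<in> I \<Longrightarrow> x + y \<in> I"
  unfolding left_ideal_def by blast

lemma left_ideal_mult: "left_ideal I \<Longrightarrow> x \<in> I \<Longrightarrow> r * x \<in> I"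
  unfolding left_ideal_def by blast

lemma left_ideal_diff: "left_ideal I \<Longrightarrow> x \<in> I \<Longrightarrow> y \<in> I \<Longrightarrow> x - y \<in> I"
  unfolding left_ideal_def by (metis diff_conv_add_uminus)

lemma left_ideal_one: "left_ideal I \<Longrightarrow> 1 \<in> I \<Longrightarrow> I = UNIV"
  using left_ideal_mult by (metis UNIV_eq_I mult.right_neutral)

lemma ideal_left_ideal: "ideal I \<Longrightarrow> left_ideal I"
  unfolding ideal_def left_ideal_def by blast

lemma ideal_mult_right: "ideal I \<Longrightarrow> x \<in> I \<Longrightarrow> x * r \<in> I"
  unfolding ideal_def by blast

lemma ideal_sum:
  assumes I: "ideal I" and K: "ideal K"
  shows "ideal {x + y |x y. x \<in> I \<and> y \<in> K}"
proof (rule idealI)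
  note LI = ideal_left_ideal[OF I] and LK = ideal_left_ideal[OF K]
  show "0 \<in> {x + y |x y. x \<in> I \<and> y \<in> K}"
    using left_ideal_zero[OF LI] left_ideal_zero[OF LK] by force
  fix a b r
  assume "a \<in> {x + y |x y. x \<in> I \<and> y \<in> K}"
  then obtain x y where a: "a = x + y" "x \<in> I" "y \<in> K" by blast
  show "r * a \<in> {x + y |x y. x \<in> I \<and> y \<in> K}"
    using a left_ideal_mult[OF LI] left_ideal_mult[OF LK] by (force simp: distrib_left)
  show "a * r \<in> {x + y |x y. x \<in> I \<and> y \<in> K}"
    using a ideal_mult_right[OF I] ideal_mult_right[OF K] by (force simp: distrib_right)
  assume "b \<in> {x + y |x y. x \<in> I \<and> y \<in> K}"
  then obtain x' y' where b: "b = x' + y'" "x' \<in> I" "y' \<in> K" by blast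
  have "a + b = (x + x') + (y + y')"
    using a b by (simp add: algebra_simps)
  then show "a + b \<in> {x + y |x y. x \<in> I \<and> y \<in> K}"
    using a b left_ideal_add[OF LI] left_ideal_add[OF LK] by blast
qed

lemma gen_ideal_ideal: "ideal (gen_ideal S)"
  unfolding gen_ideal_def by (rule idealI) (auto simp: ideal_def)

lemma gen_ideal_least: "ideal I \<Longrightarrow> S \<subseteq> I \<Longrightarrow> gen_ideal S \<subseteq> I"
  unfolding gen_ideal_def by blast

lemma gen_ideal_incl: "S \<subseteq> gen_ideal S"
  unfolding gen_ideal_def by blast

text \<open>One applies primeness to
  the ideals \<open>A = {x. xRb \<subseteq> P}\<close> and \<open>B = {y. ARy \<subseteq> P}\<close>, which satisfy \<open>AB \<subseteq> P\<close>.\<close>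

lemma prime_ideal_elementwise:
  assumes P: "prime_ideal P" and ab: "\<forall>r. a * r * b \<in> P"
  shows "a \<in> P \<or> b \<in> P"
proof -
  have LP: "left_ideal P" and IP: "ideal P"
    using P ideal_left_ideal unfolding prime_ideal_def by blast+
  define A where "A = {x. \<forall>r. x * r * b \<in> P}"
  define B where "B = {y. \<forall>x\<in>A. \<forall>r. x * r * y \<in> P}"
  have "ideal A" unfolding A_def
  proof (rule idealI)
    show "0 \<in> {x. \<forall>r. x * r * b \<in> P}" using left_ideal_zero[OF LP] by simp
  next
    fix x y r
    assume x: "x \<in> {x. \<forall>r. x * r * b \<in> P}"
    then show "r * x \<in> {x. \<forall>r. x * r * b \<in> P}"
      using left_ideal_mult[OF LP] by (simp add: mult.assoc)
    show "x * r \<in> {x. \<forall>r. x * r * b \<in> P}"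
      using x by (simp add: mult.assoc) (metis mult.assoc)
    assume "y \<in> {x. \<forall>r. x * r * b \<in> P}"
    then show "x + y \<in> {x. \<forall>r. x * r * b \<in> P}"
      using x left_ideal_add[OF LP] by (simp add: algebra_simps)
  qed
  moreover have "ideal B" unfolding B_def
  proof (rule idealI)
    show "0 \<in> {y. \<forall>x\<in>A. \<forall>r. x * r * y \<in> P}" using left_ideal_zero[OF LP] by simp
  next
    fix x y r
    assume x: "x \<in> {y. \<forall>x\<in>A. \<forall>r. x * r * y \<in> P}"
    then show "r * x \<in> {y. \<forall>x\<in>A. \<forall>r. x * r * y \<in> P}"
      by (simp add: mult.assoc) (metis mult.assoc)
    show "x * r \<in> {y. \<forall>x\<in>A. \<forall>r. x * r * y \<in> P}"
      using x ideal_mult_right[OF IP] by (simp add: mult.assoc) (metis mult.assoc)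
    assume "y \<in> {y. \<forall>x\<in>A. \<forall>r. x * r * y \<in> P}"
    then show "x + y \<in> {y. \<forall>x\<in>A. \<forall>r. x * r * y \<in> P}"
      using x left_ideal_add[OF LP] by (simp add: algebra_simps)
  qed
  moreover have "\<forall>x\<in>A. \<forall>y\<in>B. x * y \<in> P"
    unfolding B_def by (metis (no_types, lifting) mem_Collect_eq mult.right_neutral)
  ultimately have "A \<subseteq> P \<or> B \<subseteq> P"
    using P unfolding prime_ideal_def by blast
  moreover have "a \<in> A" "b \<in> B"
    using ab unfolding A_def B_def by simp_all
  ultimately show ?thesis by blast
qed

section \<open>Maximal left ideals and their cores\<close>

lemma maximal_left_ideal_cover:
  assumes N: "maximal_left_ideal N" and b: "b \<notin> N"
  shows "\<exists>m\<in>N. \<exists>s. r = m + s * b"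
proof -
  have LN: "left_ideal N" using N unfolding maximal_left_ideal_def by blast
  define Q where "Q = {m + s * b |m s. m \<in> N}"
  have "left_ideal Q" unfolding Q_def
  proof (rule left_idealI)
    show "0 \<in> {m + s * b |m s. m \<in> N}"
      using left_ideal_zero[OF LN] by (metis (mono_tags, lifting) add_0 mem_Collect_eq mult_zero_left)
  next
    fix x y r
    assume "x \<in> {m + s * b |m s. m \<in> N}"
    then obtain m s where x: "x = m + s * b" "m \<in> N" by blast
    have "r * x = r * m + (r * s) * b" using x by (simp add: algebra_simps)
    then show "r * x \<in> {m + s * b |m s. m \<in> N}" using x left_ideal_mult[OF LN] by blast
    assume "y \<in> {m + s * b |m s. m \<in> N}"
    then obtain m' s' where y: "y = m' + s' * b" "m' \<in> N" by blast
    have "x + y = (m + m') + (s + s') * b" using x y by (simp add: algebra_simps)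
    then show "x + y \<in> {m + s * b |m s. m \<in> N}" using x y left_ideal_add[OF LN] by blast
  qed
  moreover have "N \<subseteq> Q" unfolding Q_def by (force intro: exI[of _ 0])
  moreover have "b \<in> Q"
  proof -
    have "b = 0 + 1 * b" by simp
    then show ?thesis unfolding Q_def using left_ideal_zero[OF LN] by blast
  qed
  ultimately have "Q = UNIV" using N b unfolding maximal_left_ideal_def by blast
  then show ?thesis unfolding Q_def by blast
qed

text \<open>For \<open>t \<notin> N\<close> the left ideal \<open>(N : t) = {r. rt \<in> N}\<close> is again maximal
  (it is the kernel of the surjection \<open>R \<rightarrow> R/N, r \<mapsto> rt\<close> onto a simple module).\<close>

lemma maximal_left_ideal_colon:
  assumes N: "maximal_left_ideal N" and t: "t \<notin> N"
  shows "maximal_left_ideal {r. r * t \<in> N}"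
proof -
  have LN: "left_ideal N" using N unfolding maximal_left_ideal_def by blast
  let ?C = "{r. r * t \<in> N}"
  have LC: "left_ideal ?C"
    by (rule left_idealI) (use left_ideal_zero[OF LN] left_ideal_add[OF LN]
        left_ideal_mult[OF LN] in \<open>auto simp: distrib_right mult.assoc\<close>)
  have "?C \<noteq> UNIV" using t by (metis UNIV_I mem_Collect_eq mult_1)
  moreover have "N' = ?C \<or> N' = UNIV" if N': "left_ideal N'" "?C \<subseteq> N'" for N'
  proof (cases "N' = ?C")
    case False
    then obtain n where n: "n \<in> N'" "n * t \<notin> N" using N' by blast
    have "r \<in> N'" for r
    proof -
      obtain m s where ms: "m \<in> N" "r * t = m + s * (n * t)"
        using maximal_left_ideal_cover[OF N n(2)] by blast
      have "(r - s * n) * t = m" using ms(2) by (simp add: algebra_simps)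
      then have "r - s * n \<in> N'" using ms(1) N'(2) by auto
      then have "(r - s * n) + s * n \<in> N'"
        using left_ideal_add[OF N'(1)] left_ideal_mult[OF N'(1) n(1)] by blast
      then show ?thesis by simp
    qed
    then show ?thesis by blast
  qed simp
  ultimately show ?thesis using LC unfolding maximal_left_ideal_def by blast
qed

lemma jacobson_mult_mem:
  assumes N: "maximal_left_ideal N" and x: "x \<in> jacobson"
  shows "x * t \<in> N"
proof (cases "t \<in> N")
  case True
  then show ?thesis using N left_ideal_mult unfolding maximal_left_ideal_def by blast
next
  case False
  then have "maximal_left_ideal {r. r * t \<in> N}" by (rule maximal_left_ideal_colon[OF N])
  then show ?thesis using x unfolding jacobson_def by blast
qed

definition core :: "'a::ring_1 set \<Rightarrow> 'a set" where
  "core N = {r. \<forall>t. r * t \<in> N}"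

lemma core_ideal:
  assumes "left_ideal N"
  shows "ideal (core N)"
proof (rule idealI)
  show "0 \<in> core N" unfolding core_def using left_ideal_zero[OF assms] by simp
  fix x y r assume x: "x \<in> core N"
  show "r * x \<in> core N"
    using x left_ideal_mult[OF assms] unfolding core_def by (simp add: mult.assoc)
  show "x * r \<in> core N"
    using x unfolding core_def by (simp add: mult.assoc)
  assume "y \<in> core N"
  then show "x + y \<in> core N"
    using x left_ideal_add[OF assms] unfolding core_def by (simp add: distrib_right)
qed

lemma core_subset: "core N \<subseteq> N"
proof
  fix r assume "r \<in> core N"
  then have "r * 1 \<in> N" unfolding core_def by blast
  then show "r \<in> N" by simp
qed

lemma core_greatest: "ideal X \<Longrightarrow> X \<subseteq> N \<Longrightarrow> X \<subseteq> core N"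
  unfolding core_def using ideal_mult_right by blast

text \<open>Primeness: if \<open>at \<notin> N\<close> and \<open>bt' \<notin> N\<close>, then \<open>t \<in> N + Rbt'\<close>, so \<open>at \<in> N + aRbt'\<close>; if
  \<open>AB\<close> lay in the core this would put \<open>at\<close> into \<open>N\<close>.\<close>

lemma core_in_J_spec:
  assumes N: "maximal_left_ideal N"
  shows "core N \<in> J_spec"
proof -
  have LN: "left_ideal N" and NU: "N \<noteq> UNIV" using N unfolding maximal_left_ideal_def by blast+
  have I: "ideal (core N)" by (rule core_ideal[OF LN])
  have "core N \<noteq> UNIV" using core_subset NU by blast
  moreover have "A \<subseteq> core N \<or> B \<subseteq> core N"
    if A: "ideal A" and B: "ideal B" and AB: "\<forall>a\<in>A. \<forall>b\<in>B. a * b \<in> core N" for A B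
  proof (rule ccontr)
    assume "\<not> (A \<subseteq> core N \<or> B \<subseteq> core N)"
    then obtain a b t t' where a: "a \<in> A" "a * t \<notin> N" and b: "b \<in> B" "b * t' \<notin> N"
      unfolding core_def by blast
    obtain m s where ms: "m \<in> N" "t = m + s * (b * t')"
      using maximal_left_ideal_cover[OF N b(2)] by blast
    have "(a * s) * (b * t') \<in> core N"
      using AB ideal_mult_right[OF A a(1)] ideal_mult_right[OF B b(1)] by blast
    then have "a * m + (a * s) * (b * t') \<in> N"
      using core_subset left_ideal_add[OF LN] left_ideal_mult[OF LN ms(1)] by blast
    then show False using a(2) ms(2) by (simp add: algebra_simps)
  qed
  moreover have "jacobson \<subseteq> core N"
    unfolding core_def using jacobson_mult_mem[OF N] by blast
  ultimately show ?thesis using I unfolding J_spec_def prime_ideal_def by blast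
qed

lemma maximal_left_ideal_exists:
  assumes L: "left_ideal L" and one: "1 \<notin> L"
  obtains N where "maximal_left_ideal N" "L \<subseteq> N"
proof -
  define S where "S = {L'. left_ideal L' \<and> L \<subseteq> L' \<and> 1 \<notin> L'}"
  have "\<Union>C \<in> S" if C: "C \<noteq> {}" "subset.chain S C" for C
  proof -
    have CS: "C \<subseteq> S" and ch: "\<forall>X\<in>C. \<forall>Y\<in>C. X \<subseteq> Y \<or> Y \<subseteq> X"
      using C(2) unfolding subset_chain_def by blast+
    have LC: "\<And>L'. L' \<in> C \<Longrightarrow> left_ideal L'" using CS unfolding S_def by blast
    have "left_ideal (\<Union>C)"
    proof (rule left_idealI)
      show "0 \<in> \<Union>C" using C(1) LC left_ideal_zero by blast
      show "r * x \<in> \<Union>C" if "x \<in> \<Union>C" for r x using that LC left_ideal_mult by blast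
      fix x y assume "x \<in> \<Union>C" "y \<in> \<Union>C"
      then obtain X Y where "X \<in> C" "Y \<in> C" "x \<in> X" "y \<in> Y" by blast
      then show "x + y \<in> \<Union>C" using ch LC left_ideal_add by (metis UnionI subsetD)
    qed
    then show ?thesis using C(1) CS unfolding S_def by blast
  qed
  moreover have "S \<noteq> {}" using L one unfolding S_def by blast
  ultimately obtain M where M: "M \<in> S" "\<forall>Y\<in>S. M \<subseteq> Y \<longrightarrow> Y = M"
    using subset_Zorn_nonempty[of S] by blast
  have "maximal_left_ideal M"
    unfolding maximal_left_ideal_def
    using M left_ideal_one unfolding S_def by blast
  then show ?thesis using that M(1) unfolding S_def by blast
qed

section \<open>J-spec has enough points\<close>

lemma J_spec_ideal: "P \<in> J_spec \<Longrightarrow> ideal P"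
  unfolding J_spec_def prime_ideal_def by blast

lemma J_spec_left_ideal: "P \<in> J_spec \<Longrightarrow> left_ideal P"
  using J_spec_ideal ideal_left_ideal by blast

lemma J_spec_one: "P \<in> J_spec \<Longrightarrow> 1 \<notin> P"
  using J_spec_left_ideal left_ideal_one unfolding J_spec_def prime_ideal_def by blast

lemma proper_ideal_in_J_spec:
  assumes X: "ideal X" and one: "1 \<notin> X"
  obtains P where "P \<in> J_spec" "X \<subseteq> P"
proof -
  obtain N where N: "maximal_left_ideal N" "X \<subseteq> N"
    using maximal_left_ideal_exists[OF ideal_left_ideal[OF X] one] by blast
  show ?thesis using that core_in_J_spec[OF N(1)] core_greatest[OF X N(2)] by blast
qed

lemma jacobson_iff: "x \<in> jacobson \<longleftrightarrow> (\<forall>P\<in>J_spec. x \<in> P)"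
proof
  show "x \<in> jacobson \<Longrightarrow> \<forall>P\<in>J_spec. x \<in> P" unfolding J_spec_def by blast
  assume x: "\<forall>P\<in>J_spec. x \<in> P"
  show "x \<in> jacobson" unfolding jacobson_def
  proof
    fix N :: "'a set" assume "N \<in> {M. maximal_left_ideal M}"
    then show "x \<in> N" using x core_in_J_spec core_subset by blast
  qed
qed

lemma full_iff: "full u \<longleftrightarrow> (\<forall>P\<in>J_spec. u \<notin> P)"
proof
  assume "full u"
  then show "\<forall>P\<in>J_spec. u \<notin> P"
    using gen_ideal_least J_spec_ideal J_spec_one unfolding full_def by blast
next
  assume u: "\<forall>P\<in>J_spec. u \<notin> P"
  show "full u" unfolding full_def
  proof (rule ccontr)
    assume "gen_ideal {u} \<noteq> UNIV"
    then have "1 \<notin> gen_ideal {u}"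
      using left_ideal_one ideal_left_ideal gen_ideal_ideal by blast
    then obtain P where "P \<in> J_spec" "gen_ideal {u} \<subseteq> P"
      using proper_ideal_in_J_spec gen_ideal_ideal by blast
    then show False using u gen_ideal_incl by blast
  qed
qed

lemma comaximal:
  assumes I: "ideal I" and K: "ideal K" and disj: "W I \<inter> W K = {}"
  obtains x y where "x \<in> I" "y \<in> K" "x + y = 1"
proof -
  let ?S = "{x + y |x y. x \<in> I \<and> y \<in> K}"
  have IS: "I \<subseteq> ?S"
  proof
    fix x assume "x \<in> I"
    moreover have "x = x + 0" "0 \<in> K" using left_ideal_zero[OF ideal_left_ideal[OF K]] by simp_all
    ultimately show "x \<in> ?S" by blast
  qed
  have KS: "K \<subseteq> ?S"
  proof
    fix y assume "y \<in> K"
    moreover have "y = 0 + y" "0 \<in> I" using left_ideal_zero[OF ideal_left_ideal[OF I]] by simp_all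
    ultimately show "y \<in> ?S" by blast
  qed
  have "1 \<in> ?S"
  proof (rule ccontr)
    assume "1 \<notin> ?S"
    then obtain P where "P \<in> J_spec" "?S \<subseteq> P"
      using proper_ideal_in_J_spec[OF ideal_sum[OF I K]] by blast
    then have "P \<in> W I \<inter> W K" using IS KS unfolding W_def by blast
    then show False using disj by blast
  qed
  then obtain x y where "1 = x + y" "x \<in> I" "y \<in> K" by blast
  then show ?thesis using that by simp
qed

section \<open>The basic closed sets V a and the spectral form of feckly cleanness\<close>

definition V :: "'a::ring_1 \<Rightarrow> 'a set set" where
  "V a = {P \<in> J_spec. a \<in> P}"

lemma V_closed: "J_closed (V a)"
proof -
  have "V a = W (gen_ideal {a})"
    unfolding V_def W_def using gen_ideal_least gen_ideal_incl J_spec_ideal by blast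
  then show ?thesis unfolding J_closed_def using gen_ideal_ideal by blast
qed

lemma V_disjoint: "V a \<inter> V (1 - a) = {}"
  unfolding V_def using J_spec_one left_ideal_add J_spec_left_ideal by fastforce

lemma idempotent_mod_jacobson_iff:
  "(\<forall>r. e * r * (1 - e) \<in> jacobson) \<longleftrightarrow> (\<forall>P\<in>J_spec. e \<in> P \<or> 1 - e \<in> P)"
proof
  assume e: "\<forall>r. e * r * (1 - e) \<in> jacobson"
  show "\<forall>P\<in>J_spec. e \<in> P \<or> 1 - e \<in> P"
  proof
    fix P :: "'a set" assume P: "P \<in> J_spec"
    then have "\<forall>r. e * r * (1 - e) \<in> P" using e unfolding jacobson_iff by blast
    moreover have "prime_ideal P" using P unfolding J_spec_def by blast
    ultimately show "e \<in> P \<or> 1 - e \<in> P" by (rule prime_ideal_elementwise[rotated])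
  qed
next
  assume e: "\<forall>P\<in>J_spec. e \<in> P \<or> 1 - e \<in> P"
  have "e * r * (1 - e) \<in> P" if P: "P \<in> J_spec" for P r
  proof (cases "e \<in> P")
    case True
    then have "e * (r * (1 - e)) \<in> P" using ideal_mult_right[OF J_spec_ideal[OF P]] by blast
    then show ?thesis by (simp add: mult.assoc)
  next
    case False
    then show ?thesis using e P left_ideal_mult[OF J_spec_left_ideal[OF P]] by blast
  qed
  then show "\<forall>r. e * r * (1 - e) \<in> jacobson" unfolding jacobson_iff by blast
qed

lemma feckly_clean_elem_iff:
  "feckly_clean_elem a \<longleftrightarrow>
     (\<exists>e. (\<forall>P\<in>J_spec. e \<in> P \<or> 1 - e \<in> P) \<and> (\<forall>P\<in>J_spec. a - e \<notin> P))"
  unfolding feckly_clean_elem_def idempotent_mod_jacobson_iff full_iff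
proof (intro iffI; elim exE conjE)
  fix e u assume "\<forall>P\<in>J_spec. u \<notin> P" "a = e + u" "\<forall>P\<in>J_spec. e \<in> P \<or> 1 - e \<in> P"
  then show "\<exists>e. (\<forall>P\<in>J_spec. e \<in> P \<or> 1 - e \<in> P) \<and> (\<forall>P\<in>J_spec. a - e \<notin> P)"
    by (intro exI[of _ e]) simp
next
  fix e assume "\<forall>P\<in>J_spec. e \<in> P \<or> 1 - e \<in> P" "\<forall>P\<in>J_spec. a - e \<notin> P"
  moreover have "a = e + (a - e)" by simp
  ultimately show "\<exists>e u. (\<forall>P\<in>J_spec. u \<notin> P) \<and> a = e + u \<and> (\<forall>P\<in>J_spec. e \<in> P \<or> 1 - e \<in> P)"
    by blast
qed

lemma split_clopen:
  assumes e: "\<forall>P\<in>J_spec. e \<in> P \<or> 1 - e \<in> P"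
  shows "J_clopen (V e)" "J_clopen (V (1 - e))"
proof -
  have "J_spec - V e = V (1 - e)" "J_spec - V (1 - e) = V e"
    using e V_disjoint[of e] unfolding V_def by blast+
  then show "J_clopen (V e)" "J_clopen (V (1 - e))"
    unfolding J_clopen_def using V_closed unfolding V_def by auto
qed

lemma clopen_split:
  assumes "J_clopen C"
  obtains l where "C \<subseteq> V (1 - l)" "J_spec - C \<subseteq> V l"
proof -
  obtain I L where I: "ideal I" "C = W I" and L: "ideal L" "J_spec - C = W L"
    using assms unfolding J_clopen_def J_closed_def by blast
  have "W I \<inter> W L = {}" using I L by blast
  then obtain i l where il: "i \<in> I" "l \<in> L" "i + l = 1" using comaximal[OF I(1) L(1)] by blast
  have "1 - l = i" using il(3) by (simp add: algebra_simps)
  then have "C \<subseteq> V (1 - l)"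
    using I il unfolding V_def W_def by auto
  moreover have "J_spec - C \<subseteq> V l"
    using L il unfolding V_def W_def by auto
  ultimately show ?thesis using that by blast
qed

lemma feckly_clean_strongly_zero_dim:
  assumes fc: "feckly_clean TYPE('a::ring_1)"
  shows "J_spec_strongly_zero_dim TYPE('a)"
  unfolding J_spec_strongly_zero_dim_def
proof (intro allI impI)
  fix A B :: "'a set set"
  assume AB: "J_closed A \<and> J_closed B \<and> A \<inter> B = {}"
  then obtain I K where I: "ideal I" "A = W I" and K: "ideal K" "B = W K"
    unfolding J_closed_def by blast
  obtain x y where xy: "x \<in> I" "y \<in> K" "x + y = 1"
    using comaximal[OF I(1) K(1)] AB I K by blast
  obtain e where e: "\<forall>P\<in>J_spec. e \<in> P \<or> 1 - e \<in> P" and u: "\<forall>P\<in>J_spec. x - e \<notin> P"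
  proof -
    have "feckly_clean_elem x" using fc unfolding feckly_clean_def by blast
    then show ?thesis using that unfolding feckly_clean_elem_iff by blast
  qed
  have "A \<subseteq> V (1 - e)"
  proof
    fix P assume "P \<in> A"
    then have P: "P \<in> J_spec" "x \<in> P" using I xy(1) unfolding W_def by blast+
    then have "e \<notin> P" using u left_ideal_diff[OF J_spec_left_ideal[OF P(1)]] by blast
    then show "P \<in> V (1 - e)" using P e unfolding V_def by blast
  qed
  moreover have "B \<subseteq> V e"
  proof
    fix P assume "P \<in> B"
    then have P: "P \<in> J_spec" "y \<in> P" using K xy(2) unfolding W_def by blast+
    have "x = 1 - y" using xy(3) by (simp add: eq_diff_eq)
    then have "(1 - e) - y = x - e" by (simp add: diff_diff_eq add.commute)
    then have "1 - e \<notin> P" using P u left_ideal_diff[OF J_spec_left_ideal[OF P(1)]] by metis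
    then show "P \<in> V e" using P e unfolding V_def by blast
  qed
  ultimately show "\<exists>C1 C2. J_clopen C1 \<and> J_clopen C2 \<and> C1 \<inter> C2 = {} \<and> A \<subseteq> C1 \<and> B \<subseteq> C2"
    using split_clopen[OF e] V_disjoint[of e] by blast
qed

lemma strongly_zero_dim_feckly_clean:
  assumes sz: "J_spec_strongly_zero_dim TYPE('a::ring_1)"
  shows "feckly_clean TYPE('a)"
  unfolding feckly_clean_def feckly_clean_elem_iff
proof
  fix a :: 'a
  obtain C1 C2 where C: "J_clopen C1" "C1 \<inter> C2 = {}" "V a \<subseteq> C1" "V (1 - a) \<subseteq> C2"
    using sz V_closed V_disjoint unfolding J_spec_strongly_zero_dim_def by blast
  obtain l where l: "C1 \<subseteq> V (1 - l)" "J_spec - C1 \<subseteq> V l"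
    using clopen_split[OF C(1)] by blast
  have "\<forall>P\<in>J_spec. l \<in> P \<or> 1 - l \<in> P"
    using l unfolding V_def by blast
  moreover have "a - l \<notin> P" if P: "P \<in> J_spec" for P
  proof
    assume al: "a - l \<in> P"
    note LP = J_spec_left_ideal[OF P]
    show False
    proof (cases "P \<in> C1")
      case True
      then have "(1 - l) - (a - l) \<in> P" using l al left_ideal_diff[OF LP] unfolding V_def by blast
      then have "P \<in> V (1 - a)" using P unfolding V_def by simp
      then show False using C True by blast
    next
      case False
      then have "(a - l) + l \<in> P" using P l al left_ideal_add[OF LP] unfolding V_def by blast
      then have "P \<in> V a" using P unfolding V_def by simp
      then show False using C False by blast
    qed
  qed
  ultimately show "\<exists>e. (\<forall>P\<in>J_spec. e \<in> P \<or> 1 - e \<in> P) \<and> (\<forall>P\<in>J_spec. a - e \<notin> P)"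
    by blast
qed

theorem theorem3p3:
  "feckly_clean TYPE('a::ring_1) \<longleftrightarrow> J_spec_strongly_zero_dim TYPE('a)"
  using feckly_clean_strongly_zero_dim strongly_zero_dim_feckly_clean by blast

end
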